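(* Let $X\in\mathscr K$ and $W\in L^2(\Omega)$. Let $M$ be the right-continuous generalized inverse of $X$ and let $\mathcal W$ be any primitive of $W$ on $[0,1]$ (i.e. $\mathcal W'=W$). Then $$\operatorname{Proj}_{\mathscr H_X}W=\mathcal W'_M(X)\quad\text{a.e. on }\Omega,$$ where $\mathcal W'_M$ is the Radon–Nikodym derivative of $\partial_x\mathcal W(M(x))$ with respect to $\partial_xM(x)$.
   Context: $\Omega=(0,1)$ with Lebesgue measure. $\mathscr K=\{X\in L^2(\Omega):X\text{ nondecreasing}\}$, with right-continuous representatives. The right-continuous generalized inverse of $X\in\mathscr K$ is $M(x)=|\{m\in\Omega:X(m)\le x\}|$, the cumulative distribution function of the push-forward of Lebesgue measure on $\Omega$ under $X$ (equivalently $X(m)=\inf\{x:M(x)>m\}$). $\Omega_X=\{m\in\Omega: X\text{ is constant in a neighborhood of }m\}$, an open set, a countable disjoint union of maximal open intervals. $\mathscr H_X=\{U\in L^2(\Omega):U\text{ is constant on each interval }(m_l,m_r)\subset\Omega_X\}$, and $\operatorname{Proj}_{\mathscr H_X}$ is the $L^2$-orthogonal projection onto it: $\operatorname{Proj}_{\mathscr H_X}U=U$ a.e. on $\Omega\setminus\Omega_X$ and equals $\frac1{m_r-m_l}\int_{m_l}^{m_r}U$ on each maximal interval $(m_l,m_r)$ of $\Omega_X$. *)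

theory Defs
  imports "HOL-Analysis.Analysis"
begin

definition gen_inv :: "(real \<Rightarrow> real) \<Rightarrow> real \<Rightarrow> real" where
  "gen_inv X x = measure lborel {m \<in> {0<..<1}. X m \<le> x}"

definition OmegaX :: "(real \<Rightarrow> real) \<Rightarrow> real set" where
  "OmegaX X = {m \<in> {0<..<1}. \<exists>e>0. \<forall>m' \<in> ball m e. X m' = X m}"

text \<open>L2-orthogonal projection onto H_X: the average of U over the maximal
  interval (connected component) of Omega_X containing m, and U itself outside Omega_X.\<close>
definition proj_HX :: "(real \<Rightarrow> real) \<Rightarrow> (real \<Rightarrow> real) \<Rightarrow> real \<Rightarrow> real" where
  "proj_HX X U m =
     (if m \<in> OmegaX X
      then (LINT t : connected_component_set (OmegaX X) m | lborel. U t)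
             / measure lborel (connected_component_set (OmegaX X) m)
      else U m)"

text \<open>g is the Radon-Nikodym derivative of the (signed) Lebesgue-Stieltjes
  measure dF with respect to the Lebesgue-Stieltjes measure dM: g is dM-integrable
  and its dM-integral over every interval (a,b] equals F b - F a
  (the signed measure dF is determined by its values on such intervals).\<close>
definition is_LS_RN_deriv :: "(real \<Rightarrow> real) \<Rightarrow> (real \<Rightarrow> real) \<Rightarrow> (real \<Rightarrow> real) \<Rightarrow> bool" where
  "is_LS_RN_deriv F M g \<longleftrightarrow>
     g \<in> borel_measurable borel \<and>
     integrable (interval_measure M) g \<and>
     (\<forall>a b. a \<le> b \<longrightarrow>
        (LINT x : {a<..b} | interval_measure M. g x) = F b - F a)"

end

(*
  The Lebesgue-Stieltjes measure dM is the law of X under Lebesgue measure on Omega, and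
  Wp (M b) - Wp (M a) is the integral of W over {a < X <= b}. Hence g is a Radon-Nikodym
  derivative of d(Wp o M) with respect to dM exactly when g o X is a version of the
  conditional expectation of W given X; such a g exists by the Radon-Nikodym theorem applied to
  the push-forwards of the positive and negative parts of W.

  To identify g o X with the projection, split Omega according to whether X m is an atom of
  the law of X. There are countably many atoms; the level set of an atom c is an interval whose
  interior is a connected component of Omega_X, and on it both the projection and g c are the
  average of W. Off the atoms, m <= t holds iff X m <= X t, so the sets {m <= t} are
  X-measurable there: W - g o X, which integrates to zero against every X-measurable set,
  vanishes a.e. off the atoms. Points of Omega_X take atom values, so off the atoms the
  projection is W itself.
*)

theory Submission
  imports Defs "HOL-Probability.Distribution_Functions"
begin

section \<open>Conditional expectation given a real random variable\<close>

definition is_cond_exp_factor ::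
    "'a measure \<Rightarrow> ('a \<Rightarrow> real) \<Rightarrow> ('a \<Rightarrow> real) \<Rightarrow> (real \<Rightarrow> real) \<Rightarrow> bool" where
  "is_cond_exp_factor N h f g \<longleftrightarrow>
     g \<in> borel_measurable borel \<and> integrable N (\<lambda>x. g (h x)) \<and>
     (\<forall>B \<in> sets borel. (\<integral>x. indicator B (h x) * g (h x) \<partial>N) = (\<integral>x. indicator B (h x) * f x \<partial>N))"

lemma integrable_indicator_vimage_mult:
  fixes f h :: "'a \<Rightarrow> real"
  assumes "integrable N f" "h \<in> borel_measurable N" "B \<in> sets borel"
  shows "integrable N (\<lambda>x. indicator B (h x) * f x)"
  using assms by (intro Bochner_Integration.integrable_bound[OF assms(1)]) (auto simp: indicator_def)

lemma emeasure_distr_density_real: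
  fixes f h :: "'a \<Rightarrow> real"
  assumes [measurable]: "f \<in> borel_measurable N" "h \<in> borel_measurable N" "A \<in> sets borel"
  shows "emeasure (distr (density N (\<lambda>x. ennreal (f x))) borel h) A
    = (\<integral>\<^sup>+x. ennreal (indicator A (h x) * f x) \<partial>N)"
proof -
  have "emeasure (distr (density N (\<lambda>x. ennreal (f x))) borel h) A
      = (\<integral>\<^sup>+x. ennreal (f x) * indicator (h -` A \<inter> space N) x \<partial>N)"
    by (simp add: emeasure_distr emeasure_density)
  also have "\<dots> = (\<integral>\<^sup>+x. ennreal (indicator A (h x) * f x) \<partial>N)"
    by (intro nn_integral_cong) (simp add: indicator_def)
  finally show ?thesis .
qed

lemma absolutely_continuous_distr_density:
  assumes "h \<in> measurable N M" "f \<in> borel_measurable N"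
  shows "absolutely_continuous (distr N M h) (distr (density N f) M h)"
  unfolding absolutely_continuous_def
proof
  fix A assume "A \<in> null_sets (distr N M h)"
  then have "h -` A \<inter> space N \<in> null_sets N" "A \<in> sets M"
    using assms(1) by (simp_all add: null_sets_distr_iff)
  then show "A \<in> null_sets (distr (density N f) M h)"
    using assms absolutely_continuousI_density[of f N]
    by (auto simp: null_sets_distr_iff absolutely_continuous_def)
qed

lemma integral_indicator_vimage_eq_0_if_Ioc:
  fixes f h :: "'a \<Rightarrow> real"
  assumes f: "integrable N f" and h[measurable]: "h \<in> borel_measurable N"
    and Ioc: "\<And>a b. a \<le> b \<Longrightarrow> (\<integral>x. indicator {a<..b} (h x) * f x \<partial>N) = 0"
    and B: "B \<in> sets borel"
  shows "(\<integral>x. indicator B (h x) * f x \<partial>N) = 0"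
proof -
  have [measurable]: "f \<in> borel_measurable N" using f by simp
  \<comment> \<open>Since \<open>ennreal\<close> truncates at 0, \<open>\<mu> 1\<close> and \<open>\<mu> (-1)\<close> are the laws of \<open>h\<close> under the
    positive and the negative part of \<open>f N\<close>; they agree on the generators \<open>{a<..b}\<close>.\<close>
  define \<mu> where "\<mu> s = distr (density N (\<lambda>x. ennreal (s * f x))) borel h" for s :: real
  have emeasure_\<mu>: "emeasure (\<mu> s) A = (\<integral>\<^sup>+x. ennreal (indicator A (h x) * (s * f x)) \<partial>N)"
    if "A \<in> sets borel" for s A
    unfolding \<mu>_def using that by (intro emeasure_distr_density_real) simp_all
  have integral_eq: "(\<integral>x. indicator A (h x) * f x \<partial>N) = measure (\<mu> 1) A - measure (\<mu> (-1)) A"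
    if A: "A \<in> sets borel" for A
    using integrable_indicator_vimage_mult[OF f h A]
    by (simp add: real_lebesgue_integral_def measure_def emeasure_\<mu>[OF A])
  have finite_\<mu>: "emeasure (\<mu> s) A \<noteq> \<infinity>" if "A \<in> sets borel" "\<bar>s\<bar> = 1" for s A
  proof -
    have "s * f x \<le> norm (f x)" for x
      using that(2) by (metis abs_ge_self abs_mult mult_1 real_norm_def)
    then have "emeasure (\<mu> s) A \<le> (\<integral>\<^sup>+x. ennreal (norm (f x)) \<partial>N)"
      unfolding emeasure_\<mu>[OF that(1)] by (intro nn_integral_mono) (simp add: indicator_def ennreal_leI)
    also have "\<dots> < \<infinity>" using f by (simp add: integrable_iff_bounded)
    finally show ?thesis by simp
  qed
  have "\<mu> 1 = \<mu> (-1)"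
  proof (rule measure_eqI_generator_eq[where \<Omega>=UNIV and E="range (\<lambda>(a, b). {a<..b::real})"
        and A="\<lambda>i. {- real (i::nat)<..real i}"])
    fix I assume "I \<in> range (\<lambda>(a, b). {a<..b::real})"
    then obtain a b where "I = {a<..b}" by auto
    then show "emeasure (\<mu> 1) I = emeasure (\<mu> (-1)) I"
      using integral_eq[of I] Ioc[of a b] finite_\<mu>[of I 1] finite_\<mu>[of I "-1"]
      by (cases "a \<le> b") (auto simp: emeasure_eq_ennreal_measure)
  next
    show "emeasure (\<mu> 1) {- real i<..real i} \<noteq> \<infinity>" for i :: nat
      using finite_\<mu>[of _ 1] by simp
  qed (auto simp: \<mu>_def borel_sigma_sets_Ioc Int_stable_def UN_Ioc_eq_UNIV)
  then show ?thesis using integral_eq[OF B] by simp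
qed

lemma is_cond_exp_factor_iff_Ioc:
  fixes f h :: "'a \<Rightarrow> real" and g :: "real \<Rightarrow> real"
  assumes f: "integrable N f" and h[measurable]: "h \<in> borel_measurable N"
    and g[measurable]: "g \<in> borel_measurable borel" and gh: "integrable N (\<lambda>x. g (h x))"
  shows "is_cond_exp_factor N h f g \<longleftrightarrow>
    (\<forall>a b. a \<le> b \<longrightarrow>
      (\<integral>x. indicator {a<..b} (h x) * g (h x) \<partial>N) = (\<integral>x. indicator {a<..b} (h x) * f x \<partial>N))"
proof -
  have diff: "(\<integral>x. indicator B (h x) * (g (h x) - f x) \<partial>N)
      = (\<integral>x. indicator B (h x) * g (h x) \<partial>N) - (\<integral>x. indicator B (h x) * f x \<partial>N)"
    if "B \<in> sets borel" for B
    using integrable_indicator_vimage_mult[OF gh h that] integrable_indicator_vimage_mult[OF f h that]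
    by (simp add: right_diff_distrib)
  have "integrable N (\<lambda>x. g (h x) - f x)" using gh f by simp
  from integral_indicator_vimage_eq_0_if_Ioc[OF this h]
  show ?thesis
    unfolding is_cond_exp_factor_def using g gh diff by auto
qed

lemma cond_exp_factor_exists_nonneg:
  fixes f h :: "'a \<Rightarrow> real"
  assumes "finite_measure N" and f: "integrable N f" and f_nonneg: "\<And>x. 0 \<le> f x"
    and h[measurable]: "h \<in> borel_measurable N"
  shows "\<exists>g. is_cond_exp_factor N h f g"
proof -
  interpret N: finite_measure N by fact
  have [measurable]: "f \<in> borel_measurable N" using f by simp
  define \<nu> where "\<nu> = distr N borel h"
  define \<rho> where "\<rho> = distr (density N (\<lambda>x. ennreal (f x))) borel h"
  interpret \<nu>: finite_measure \<nu> unfolding \<nu>_def by (rule N.finite_measure_distr) simp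
  have sets_\<nu>[simp]: "sets \<nu> = sets borel" and sets_\<rho>[simp]: "sets \<rho> = sets borel"
    by (simp_all add: \<nu>_def \<rho>_def)
  interpret \<rho>: finite_measure \<rho>
  proof
    have "emeasure \<rho> (space \<rho>) = (\<integral>\<^sup>+x. ennreal (f x) \<partial>N)"
      unfolding \<rho>_def using emeasure_distr_density_real[of f N h UNIV] by simp
    then show "emeasure \<rho> (space \<rho>) \<noteq> \<infinity>"
      using f by (simp add: integrable_iff_bounded f_nonneg)
  qed
  have ac: "absolutely_continuous \<nu> \<rho>"
    unfolding \<nu>_def \<rho>_def by (rule absolutely_continuous_distr_density) simp_all
  define g where "g x = enn2real (RN_deriv \<nu> \<rho> x)" for x
  have g[measurable]: "g \<in> borel_measurable borel"
    using borel_measurable_RN_deriv[of \<nu> \<rho>] unfolding g_def measurable_cong_sets[OF sets_\<nu> refl]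
    by measurable
  have integral_\<rho>: "integral\<^sup>L \<rho> \<phi> = (\<integral>x. g (h x) * \<phi> (h x) \<partial>N)"
    if [measurable]: "\<phi> \<in> borel_measurable borel" for \<phi> :: "real \<Rightarrow> real"
  proof -
    have "integral\<^sup>L \<rho> \<phi> = integral\<^sup>L \<nu> (\<lambda>x. g x * \<phi> x)"
      unfolding g_def by (rule \<nu>.RN_deriv_integral[OF \<rho>.sigma_finite_measure_axioms ac]) (simp_all add: \<nu>_def)
    then show ?thesis by (simp add: \<nu>_def integral_distr)
  qed
  have integral_\<rho>': "integral\<^sup>L \<rho> \<phi> = (\<integral>x. f x * \<phi> (h x) \<partial>N)"
    if [measurable]: "\<phi> \<in> borel_measurable borel" for \<phi> :: "real \<Rightarrow> real"
    by (simp add: \<rho>_def integral_distr integral_real_density f_nonneg)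
  have "integrable \<nu> (\<lambda>x. g x * 1)"
    unfolding g_def
    by (rule \<nu>.RN_deriv_integrable[OF \<rho>.sigma_finite_measure_axioms ac, THEN iffD1]) (simp_all add: \<nu>_def)
  then have "integrable N (\<lambda>x. g (h x))" by (simp add: \<nu>_def integrable_distr_eq)
  moreover have "(\<integral>x. indicator B (h x) * g (h x) \<partial>N) = (\<integral>x. indicator B (h x) * f x \<partial>N)"
    if "B \<in> sets borel" for B
    using integral_\<rho>[of "indicator B"] integral_\<rho>'[of "indicator B"] that by (simp add: mult.commute)
  ultimately show ?thesis unfolding is_cond_exp_factor_def using g by blast
qed

lemma is_cond_exp_factor_diff:
  fixes f\<^sub>1 f\<^sub>2 h :: "'a \<Rightarrow> real"
  assumes "integrable N f\<^sub>1" "integrable N f\<^sub>2" "h \<in> borel_measurable N"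
    and g\<^sub>1: "is_cond_exp_factor N h f\<^sub>1 g\<^sub>1" and g\<^sub>2: "is_cond_exp_factor N h f\<^sub>2 g\<^sub>2"
  shows "is_cond_exp_factor N h (\<lambda>x. f\<^sub>1 x - f\<^sub>2 x) (\<lambda>y. g\<^sub>1 y - g\<^sub>2 y)"
  unfolding is_cond_exp_factor_def
proof (intro conjI ballI)
  fix B :: "real set" assume B: "B \<in> sets borel"
  note integrable = integrable_indicator_vimage_mult[OF _ assms(3) B]
  show "(\<integral>x. indicator B (h x) * (g\<^sub>1 (h x) - g\<^sub>2 (h x)) \<partial>N) = (\<integral>x. indicator B (h x) * (f\<^sub>1 x - f\<^sub>2 x) \<partial>N)"
    using g\<^sub>1 g\<^sub>2 B assms(1,2) integrable[of f\<^sub>1] integrable[of f\<^sub>2]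
      integrable[of "\<lambda>x. g\<^sub>1 (h x)"] integrable[of "\<lambda>x. g\<^sub>2 (h x)"]
    by (simp add: is_cond_exp_factor_def right_diff_distrib)
qed (use g\<^sub>1 g\<^sub>2 in \<open>auto simp: is_cond_exp_factor_def\<close>)

lemma cond_exp_factor_exists:
  fixes f h :: "'a \<Rightarrow> real"
  assumes N: "finite_measure N" and f: "integrable N f" and h[measurable]: "h \<in> borel_measurable N"
  shows "\<exists>g. is_cond_exp_factor N h f g"
proof -
  obtain g\<^sub>1 where g\<^sub>1: "is_cond_exp_factor N h (\<lambda>x. max (f x) 0) g\<^sub>1"
    using cond_exp_factor_exists_nonneg[OF N _ _ h] f by fastforce
  obtain g\<^sub>2 where g\<^sub>2: "is_cond_exp_factor N h (\<lambda>x. max (- f x) 0) g\<^sub>2"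
    using cond_exp_factor_exists_nonneg[OF N _ _ h] f by fastforce
  have "is_cond_exp_factor N h f (\<lambda>y. g\<^sub>1 y - g\<^sub>2 y)"
  proof -
    have "(\<lambda>x. max (f x) 0 - max (- f x) 0) = f" by (auto simp: fun_eq_iff max_def)
    with is_cond_exp_factor_diff[OF _ _ h g\<^sub>1 g\<^sub>2] f show ?thesis by simp
  qed
  then show ?thesis by blast
qed

section \<open>Intervals and distribution functions on the real line\<close>

lemma is_interval_vimage_mono_on:
  fixes X :: "real \<Rightarrow> real"
  assumes X: "mono_on A X" and A: "is_interval A" and I: "is_interval I"
  shows "is_interval {m \<in> A. X m \<in> I}"
  unfolding is_interval_1
proof (intro ballI allI impI)
  fix a b x assume a: "a \<in> {m \<in> A. X m \<in> I}" and b: "b \<in> {m \<in> A. X m \<in> I}" and x: "a \<le> x \<and> x \<le> b"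
  then have "x \<in> A" using A unfolding is_interval_1 by blast
  with a b x have "X a \<le> X x" "X x \<le> X b" by (auto intro: mono_onD[OF X])
  with a b I have "X x \<in> I" unfolding is_interval_1 by blast
  with \<open>x \<in> A\<close> show "x \<in> {m \<in> A. X m \<in> I}" by simp
qed

lemma is_interval_between_Inf_Sup:
  fixes S :: "real set"
  assumes S: "is_interval S" "bounded S" "S \<noteq> {}"
  shows "{Inf S<..<Sup S} \<subseteq> S" and "S \<subseteq> {Inf S..Sup S}"
proof -
  have bdd: "bdd_below S" "bdd_above S"
    using S(2) by (simp_all add: bounded_imp_bdd_below bounded_imp_bdd_above)
  show "S \<subseteq> {Inf S..Sup S}" using bdd by (auto intro: cInf_lower cSup_upper)
  show "{Inf S<..<Sup S} \<subseteq> S"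
  proof
    fix x assume x: "x \<in> {Inf S<..<Sup S}"
    obtain a where "a \<in> S" "a < x" using cInf_less_iff[OF S(3) bdd(1)] x by auto
    moreover obtain b where "b \<in> S" "x < b" using less_cSup_iff[OF S(3) bdd(2)] x by auto
    ultimately show "x \<in> S" using S(1) unfolding is_interval_1 by (meson less_imp_le)
  qed
qed

lemma AE_mem_interval_iff_Icc:
  fixes S :: "real set"
  assumes "is_interval S" "bounded S" "S \<noteq> {}"
  shows "AE x in lborel. x \<in> S \<longleftrightarrow> x \<in> {Inf S..Sup S}"
proof (rule AE_I'[of "{Inf S, Sup S}"])
  show "{x \<in> space lborel. \<not> (x \<in> S \<longleftrightarrow> x \<in> {Inf S..Sup S})} \<subseteq> {Inf S, Sup S}"
  proof (intro subsetI)
    fix x assume "x \<in> {x \<in> space lborel. \<not> (x \<in> S \<longleftrightarrow> x \<in> {Inf S..Sup S})}"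
    then show "x \<in> {Inf S, Sup S}"
      using is_interval_between_Inf_Sup[OF assms] by (cases "x \<in> {Inf S<..<Sup S}") auto
  qed
qed (simp add: finite_imp_null_set_lborel)

lemma measure_lborel_interval:
  fixes S :: "real set"
  assumes "is_interval S" "bounded S" "S \<noteq> {}"
  shows "measure lborel S = Sup S - Inf S"
proof -
  have "Inf S \<le> Sup S" using is_interval_between_Inf_Sup(2)[OF assms] assms(3) by auto
  moreover have "measure lborel S = measure lborel {Inf S..Sup S}"
    by (rule measure_eq_AE[OF AE_mem_interval_iff_Icc[OF assms]])
      (simp_all add: real_interval_borel_measurable[OF assms(1)])
  ultimately show ?thesis by simp
qed

lemma (in real_distribution) interval_measure_cdf: "interval_measure (cdf M) = M"
  by (intro cdf_unique real_distribution_interval_measure cdf_interval_measure)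
    (simp_all add: cdf_nondecreasing cdf_is_right_cont cdf_lim_at_bot cdf_lim_at_top_prob real_distribution_axioms)

section \<open>Level sets of a monotone function on the unit interval\<close>

abbreviation Omega :: "real measure" where
  "Omega \<equiv> restrict_space lborel {0<..<1}"

interpretation Omega: prob_space Omega
  by (rule prob_spaceI) (simp add: emeasure_restrict_space space_restrict_space)

lemma integral_Omega:
  fixes f :: "real \<Rightarrow> real"
  shows "(\<integral>m. f m \<partial>Omega) = (LINT m:{0<..<1}|lborel. f m)"
  unfolding set_lebesgue_integral_def by (rule integral_restrict_space) simp

lemma measure_Omega: "A \<subseteq> {0<..<1} \<Longrightarrow> A \<in> sets lborel \<Longrightarrow> measure Omega A = measure lborel A"
  by (rule measure_restrict_space) auto

definition level_set :: "(real \<Rightarrow> real) \<Rightarrow> real \<Rightarrow> real set" where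
  "level_set X c = {m \<in> {0<..<1}. X m = c}"

text \<open>The atoms of the law of \<open>X\<close>.\<close>

definition flat_values :: "(real \<Rightarrow> real) \<Rightarrow> real set" where
  "flat_values X = {c. 0 < measure lborel (level_set X c)}"

lemma level_set_subset: "level_set X c \<subseteq> {0<..<1}"
  by (auto simp: level_set_def)

lemma bounded_level_set: "bounded (level_set X c)"
  by (rule bounded_subset[of "{0..1}"]) (auto simp: level_set_def)

lemma OmegaX_imp_ball_subset_level_set:
  assumes "m \<in> OmegaX X"
  obtains e where "e > 0" "ball m e \<subseteq> level_set X (X m)"
proof -
  obtain e where e: "e > 0" "\<forall>m' \<in> ball m e. X m' = X m" and m: "m \<in> {0<..<1}"
    using assms by (auto simp: OmegaX_def)
  obtain d where d: "d > 0" "ball m d \<subseteq> {0<..<1}"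
    using openE[OF open_greaterThanLessThan m] .
  have "ball m (min e d) \<subseteq> level_set X (X m)"
  proof
    fix y assume "y \<in> ball m (min e d)"
    then have "y \<in> ball m e" "y \<in> ball m d" by auto
    then show "y \<in> level_set X (X m)" using e(2) d(2) unfolding level_set_def by blast
  qed
  moreover have "min e d > 0" using e(1) d(1) by simp
  ultimately show ?thesis by (rule that[rotated])
qed

lemma OmegaX_subset: "OmegaX X \<subseteq> {0<..<1}"
  unfolding OmegaX_def by blast

lemma open_subset_level_set_imp_subset_OmegaX:
  assumes "open U" "U \<subseteq> level_set X c"
  shows "U \<subseteq> OmegaX X"
proof
  fix m assume m: "m \<in> U"
  obtain e where e: "e > 0" "ball m e \<subseteq> U" using openE[OF assms(1) m] .
  have const: "X m' = c \<and> m' \<in> {0<..<1}" if "m' \<in> U" for m'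
    using assms(2) that by (auto simp: level_set_def)
  have "X m' = X m" if "m' \<in> ball m e" for m'
  proof -
    have "m' \<in> U" using that e(2) by blast
    then show ?thesis using const[of m'] const[OF m] by simp
  qed
  then show "m \<in> OmegaX X"
    unfolding OmegaX_def using const[OF m] e(1) by blast
qed

lemma open_OmegaX: "open (OmegaX X)"
  unfolding open_contains_ball
proof
  fix m assume "m \<in> OmegaX X"
  then obtain e where "e > 0" "ball m e \<subseteq> level_set X (X m)"
    by (rule OmegaX_imp_ball_subset_level_set)
  then show "\<exists>e>0. ball m e \<subseteq> OmegaX X"
    using open_subset_level_set_imp_subset_OmegaX[OF open_ball] by blast
qed

lemma eventually_eq_at_OmegaX:
  assumes "m \<in> OmegaX X"
  shows "eventually (\<lambda>m'. X m = X m') (at m within A)"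
proof -
  obtain e where "e > 0" "ball m e \<subseteq> level_set X (X m)"
    using assms by (rule OmegaX_imp_ball_subset_level_set)
  from eventually_at_ball[OF this(1)] show ?thesis
    by eventually_elim (use \<open>ball m e \<subseteq> level_set X (X m)\<close> in \<open>auto simp: level_set_def\<close>)
qed

context
  fixes X :: "real \<Rightarrow> real"
  assumes X_mono: "mono_on {0<..<1} X"
begin

lemma borel_measurable_Omega_mono: "X \<in> borel_measurable Omega"
  using borel_measurable_mono_on_fnc[OF X_mono]
  by (simp add: measurable_cong_sets[OF sets_restrict_space_cong[OF sets_lborel] refl])

lemma is_interval_level_set: "is_interval (level_set X c)"
proof -
  have "is_interval {0<..<1::real}" "is_interval {c}" by (auto simp: is_interval_1)
  from is_interval_vimage_mono_on[OF X_mono this] show ?thesis unfolding level_set_def by simp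
qed

lemma sets_lborel_level_set: "level_set X c \<in> sets lborel"
  using real_interval_borel_measurable[OF is_interval_level_set] by simp

lemma flat_value_if_Ioo_subset:
  assumes "a < b" "{a<..<b} \<subseteq> level_set X c"
  shows "c \<in> flat_values X"
proof -
  let ?L = "level_set X c"
  have L: "is_interval ?L" "bounded ?L" "?L \<noteq> {}"
    using is_interval_level_set bounded_level_set assms by fastforce+
  have "Inf ?L \<le> a" "b \<le> Sup ?L"
    using cInf_superset_mono[OF _ bounded_imp_bdd_below[OF L(2)] assms(2)]
      cSup_subset_mono[OF _ bounded_imp_bdd_above[OF L(2)] assms(2)] assms(1)
    by simp_all
  then show ?thesis
    using measure_lborel_interval[OF L] assms(1) by (simp add: flat_values_def)
qed

lemma flat_value_if_eq:
  assumes "0 < t" "t < m" "m < 1" "X t = X m"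
  shows "X m \<in> flat_values X"
proof (rule flat_value_if_Ioo_subset)
  show "{t<..<m} \<subseteq> level_set X (X m)"
  proof
    fix y assume y: "y \<in> {t<..<m}"
    have "X t \<le> X y" by (rule mono_onD[OF X_mono]) (use y assms in auto)
    moreover have "X y \<le> X m" by (rule mono_onD[OF X_mono]) (use y assms in auto)
    ultimately show "y \<in> level_set X (X m)" using y assms by (simp add: level_set_def)
  qed
qed (fact assms(2))

lemma flat_value_if_OmegaX:
  assumes "m \<in> OmegaX X"
  shows "X m \<in> flat_values X"
proof -
  obtain e where "e > 0" "ball m e \<subseteq> level_set X (X m)"
    using assms by (rule OmegaX_imp_ball_subset_level_set)
  then show ?thesis
    by (intro flat_value_if_Ioo_subset[of "m - e" "m + e"]) (simp_all add: ball_eq_greaterThanLessThan)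
qed

lemma measure_distr_Omega:
  assumes "A \<in> sets borel"
  shows "measure (distr Omega borel X) A = measure lborel {m \<in> {0<..<1}. X m \<in> A}"
proof -
  have "measure (distr Omega borel X) A = measure Omega (X -` A \<inter> space Omega)"
    using borel_measurable_Omega_mono assms by (rule measure_distr)
  also have "X -` A \<inter> space Omega = {m \<in> {0<..<1}. X m \<in> A}"
    by (auto simp: space_restrict_space)
  also have "measure Omega {m \<in> {0<..<1}. X m \<in> A} = measure lborel {m \<in> {0<..<1}. X m \<in> A}"
    using measurable_sets[OF borel_measurable_Omega_mono assms] \<open>X -` A \<inter> space Omega = _\<close>
    by (intro measure_Omega) (auto simp: sets_restrict_space_iff)
  finally show ?thesis .
qed

lemma countable_flat_values: "countable (flat_values X)"
proof -
  interpret finite_measure "distr Omega borel X"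
    using borel_measurable_Omega_mono by (rule Omega.finite_measure_distr)
  have "flat_values X \<subseteq> {c. measure (distr Omega borel X) {c} \<noteq> 0}"
    by (auto simp: flat_values_def measure_distr_Omega level_set_def)
  then show ?thesis using countable_support by (rule countable_subset)
qed

lemma sets_borel_flat_values: "flat_values X \<in> sets borel"
  by (rule sets.countable[OF _ countable_flat_values]) simp

lemma connected_component_OmegaX_flat_level:
  fixes c :: real
  defines "L \<equiv> level_set X c"
  assumes c: "c \<in> flat_values X" and m: "m \<in> {Inf L<..<Sup L}"
  shows "connected_component_set (OmegaX X) m = {Inf L<..<Sup L}"
proof -
  let ?C = "connected_component_set (OmegaX X) m"
  have "L \<noteq> {}" using c by (auto simp: flat_values_def L_def)
  then have L: "{Inf L<..<Sup L} \<subseteq> L" "L \<subseteq> {Inf L..Sup L}"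
    using is_interval_between_Inf_Sup[OF is_interval_level_set bounded_level_set]
    unfolding L_def by blast+
  have "{Inf L<..<Sup L} \<subseteq> OmegaX X"
    using open_subset_level_set_imp_subset_OmegaX[OF open_greaterThanLessThan L(1)[unfolded L_def]]
    unfolding L_def .
  then have Ioo_C: "{Inf L<..<Sup L} \<subseteq> ?C"
    using connected_component_maximal[OF m connected_Ioo] by blast
  have C_OmegaX: "?C \<subseteq> OmegaX X" by (rule connected_component_subset)
  have "X m = c" using m L(1) by (auto simp: L_def level_set_def)
  have "?C \<subseteq> L"
  proof
    fix y assume y: "y \<in> ?C"
    have "\<forall>a\<in>?C. eventually (\<lambda>b. X a = X b) (at a within ?C)"
      using eventually_eq_at_OmegaX C_OmegaX by blast
    from connected_local_const[OF connected_connected_component _ y this] m Ioo_C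
    have "X y = c" using \<open>X m = c\<close> by auto
    moreover have "y \<in> {0<..<1}" using y C_OmegaX OmegaX_subset by blast
    ultimately show "y \<in> L" by (simp add: L_def level_set_def)
  qed
  then have "?C \<subseteq> interior {Inf L..Sup L}"
    using L(2) by (intro interior_maximal open_connected_component open_OmegaX) blast
  with Ioo_C show ?thesis by auto
qed

lemma proj_HX_on_flat_level:
  fixes c :: real
  defines "L \<equiv> level_set X c"
  assumes W[measurable]: "W \<in> borel_measurable lborel" and c: "c \<in> flat_values X"
  shows "AE m in lborel. m \<in> L \<longrightarrow> proj_HX X W m = (LINT t:L|lborel. W t) / measure lborel L"
proof -
  have "L \<noteq> {}" using c by (auto simp: flat_values_def L_def)
  note L_interval = is_interval_level_set[of c, folded L_def] bounded_level_set[of X c, folded L_def] this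
  have "AE m in lborel. m \<notin> {Inf L, Sup L}"
    by (intro AE_not_in finite_imp_null_set_lborel) simp
  with AE_mem_interval_iff_Icc[OF L_interval]
  have AE_Ioo: "AE m in lborel. m \<in> L \<longleftrightarrow> m \<in> {Inf L<..<Sup L}"
    by eventually_elim auto
  have "(LINT t:{Inf L<..<Sup L}|lborel. W t) = (LINT t:L|lborel. W t)"
    using sets_lborel_level_set[of c, folded L_def]
    by (intro set_integral_cong_set AE_Ioo) (simp_all add: set_borel_measurable_def)
  moreover have "measure lborel {Inf L<..<Sup L} = measure lborel L"
    using measure_lborel_interval[OF L_interval] is_interval_between_Inf_Sup(2)[OF L_interval] \<open>L \<noteq> {}\<close>
    by auto
  ultimately have "proj_HX X W m = (LINT t:L|lborel. W t) / measure lborel L"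
    if "m \<in> {Inf L<..<Sup L}" for m
    using connected_component_OmegaX_flat_level[OF c that[unfolded L_def]] that
    unfolding proj_HX_def L_def by (simp add: connected_component_eq_empty[symmetric])
  with AE_Ioo show ?thesis by auto
qed

lemma is_interval_sublevel_set: "is_interval {m \<in> {0<..<1}. X m \<le> x}"
proof -
  have "is_interval {0<..<1::real}" "is_interval {..x}" by (auto simp: is_interval_1)
  from is_interval_vimage_mono_on[OF X_mono this] show ?thesis by simp
qed

lemma gen_inv_bounds: "gen_inv X x \<in> {0..1}"
proof -
  from real_interval_borel_measurable[OF is_interval_sublevel_set]
  have "gen_inv X x \<le> measure lborel {0<..<1::real}"
    unfolding gen_inv_def by (intro measure_mono_fmeasurable) (auto simp: fmeasurable_def)
  then show ?thesis by (simp add: gen_inv_def)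
qed

lemma AE_sublevel_iff_Icc_gen_inv:
  "AE m in lborel. m \<in> {m \<in> {0<..<1}. X m \<le> x} \<longleftrightarrow> m \<in> {0..gen_inv X x}"
proof (cases "{m \<in> {0<..<1}. X m \<le> x} = {}")
  case True
  then have "gen_inv X x = 0" unfolding gen_inv_def by (subst True) simp
  then show ?thesis
    using True AE_not_in[OF finite_imp_null_set_lborel[of "{0}"]] by auto
next
  case False
  define S where "S = {m \<in> {0<..<1}. X m \<le> x}"
  have "is_interval S" unfolding S_def by (rule is_interval_sublevel_set)
  moreover have "bounded S" by (rule bounded_subset[of "{0..1}"]) (auto simp: S_def)
  moreover have "S \<noteq> {}" using False by (simp add: S_def)
  ultimately have S: "is_interval S" "bounded S" "S \<noteq> {}" by blast+
  then obtain m\<^sub>0 where m\<^sub>0: "m\<^sub>0 \<in> S" by blast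
  then have "0 < m\<^sub>0" by (simp add: S_def)
  have "{0<..m\<^sub>0} \<subseteq> S"
  proof
    fix m assume "m \<in> {0<..m\<^sub>0}"
    moreover have "X m \<le> X m\<^sub>0" by (rule mono_onD[OF X_mono]) (use m\<^sub>0 \<open>m \<in> {0<..m\<^sub>0}\<close> in \<open>auto simp: S_def\<close>)
    ultimately show "m \<in> S" using m\<^sub>0 by (auto simp: S_def)
  qed
  then have "Inf S \<le> Inf {0<..m\<^sub>0}"
    using \<open>0 < m\<^sub>0\<close> by (intro cInf_superset_mono bounded_imp_bdd_below[OF S(2)]) auto
  then have "Inf S \<le> 0" using \<open>0 < m\<^sub>0\<close> by simp
  moreover have "0 \<le> Inf S" using S(3) by (intro cInf_greatest) (auto simp: S_def)
  ultimately have "Inf S = 0" by simp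
  moreover have "gen_inv X x = Sup S - Inf S"
    unfolding gen_inv_def S_def[symmetric] by (rule measure_lborel_interval[OF S])
  ultimately show ?thesis
    using AE_mem_interval_iff_Icc[OF S] by (simp add: S_def)
qed

lemma interval_measure_gen_inv: "interval_measure (gen_inv X) = distr Omega borel X"
proof -
  interpret real_distribution "distr Omega borel X"
    using borel_measurable_Omega_mono by simp
  have "gen_inv X = cdf (distr Omega borel X)"
    by (simp add: fun_eq_iff cdf_def measure_distr_Omega gen_inv_def)
  then show ?thesis by (simp add: interval_measure_cdf)
qed

lemma primitive_gen_inv:
  fixes W Wp :: "real \<Rightarrow> real"
  assumes W[measurable]: "W \<in> borel_measurable lborel"
    and Wp: "\<forall>m \<in> {0..1}. Wp m = Wp 0 + (LINT t : {0..m} | lborel. W t)"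
  shows "Wp (gen_inv X x) = Wp 0 + (\<integral>m. indicator {..x} (X m) * W m \<partial>Omega)"
proof -
  have [measurable]: "{m \<in> {0<..<1}. X m \<le> x} \<in> sets borel"
    using real_interval_borel_measurable[OF is_interval_sublevel_set] .
  have "(\<integral>m. indicator {..x} (X m) * W m \<partial>Omega) = (LINT m:{m \<in> {0<..<1}. X m \<le> x}|lborel. W m)"
    unfolding integral_Omega set_lebesgue_integral_def
    by (intro Bochner_Integration.integral_cong) (auto simp: indicator_def)
  moreover have "set_borel_measurable lborel {m \<in> {0<..<1}. X m \<le> x} W"
    "set_borel_measurable lborel {0..gen_inv X x} W"
    unfolding set_borel_measurable_def by measurable
  then have "(LINT m:{m \<in> {0<..<1}. X m \<le> x}|lborel. W m) = (LINT t:{0..gen_inv X x}|lborel. W t)"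
    using AE_sublevel_iff_Icc_gen_inv by (rule set_integral_cong_set[symmetric])
  moreover have "Wp (gen_inv X x) = Wp 0 + (LINT t:{0..gen_inv X x}|lborel. W t)"
    using Wp gen_inv_bounds by blast
  ultimately show ?thesis by simp
qed

section \<open>The projection as a conditional expectation\<close>

lemma integral_Omega_indicator_level_set:
  fixes f :: "real \<Rightarrow> real"
  shows "(\<integral>m. indicator {c} (X m) * f m \<partial>Omega) = (LINT m:level_set X c|lborel. f m)"
  unfolding integral_Omega set_lebesgue_integral_def
  by (intro Bochner_Integration.integral_cong) (auto simp: level_set_def indicator_def)

lemma indicator_Iic_off_flat_values:
  "\<exists>B \<in> sets borel. \<forall>m \<in> {0<..<1}.
     indicator {..t} m * indicator (- flat_values X) (X m) = (indicator B (X m) :: real)"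
proof (cases "t \<le> 0 \<or> 1 \<le> t")
  case True
  then show ?thesis
    by (intro bexI[of _ "if t \<le> 0 then {} else - flat_values X"])
      (auto intro: borel_comp sets_borel_flat_values)
next
  case False
  have "indicator {..t} m * indicator (- flat_values X) (X m) = (indicator ({..X t} - flat_values X) (X m) :: real)"
    if m: "m \<in> {0<..<1}" for m
  proof (cases "m \<le> t")
    case True
    then have "X m \<le> X t" using m False by (intro mono_onD[OF X_mono]) auto
    then show ?thesis using True by (simp add: indicator_def)
  next
    case m_t: False
    then have "X t \<le> X m" using m False by (intro mono_onD[OF X_mono]) auto
    then have "X m \<le> X t \<Longrightarrow> X m \<in> flat_values X"
      using flat_value_if_eq[of t m] m m_t False by auto
    then show ?thesis using m_t by (auto simp: indicator_def)
  qed
  then show ?thesis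
    using sets_borel_flat_values by (intro bexI[of _ "{..X t} - flat_values X"]) auto
qed

lemma AE_zero_off_flat_values:
  fixes D :: "real \<Rightarrow> real"
  assumes D: "integrable Omega D"
    and zero: "\<And>B. B \<in> sets borel \<Longrightarrow> (\<integral>m. indicator B (X m) * D m \<partial>Omega) = 0"
  shows "AE m in Omega. X m \<notin> flat_values X \<longrightarrow> D m = 0"
proof -
  note X = borel_measurable_Omega_mono
  have id: "(\<lambda>m. m) \<in> borel_measurable Omega"
    by (simp add: measurable_restrict_space1)
  define E where "E m = indicator (- flat_values X) (X m) * D m" for m
  have E: "integrable Omega E"
    unfolding E_def using sets_borel_flat_values
    by (intro integrable_indicator_vimage_mult[OF D X]) auto
  have Iic: "(\<integral>m. indicator {..t} m * E m \<partial>Omega) = 0" for t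
  proof -
    obtain B where "B \<in> sets borel"
      and B: "\<forall>m \<in> {0<..<1}. indicator {..t} m * indicator (- flat_values X) (X m) = (indicator B (X m) :: real)"
      using indicator_Iic_off_flat_values by blast
    have "(\<integral>m. indicator {..t} m * E m \<partial>Omega) = (\<integral>m. indicator B (X m) * D m \<partial>Omega)"
      using B unfolding E_def by (intro Bochner_Integration.integral_cong) (auto simp: space_restrict_space mult.assoc[symmetric])
    then show ?thesis using zero[OF \<open>B \<in> sets borel\<close>] by simp
  qed
  have "(\<integral>m. indicator {a<..b} m * E m \<partial>Omega) = 0" if "a \<le> b" for a b
  proof -
    have "(\<integral>m. indicator {a<..b} m * E m \<partial>Omega)
        = (\<integral>m. indicator {..b} m * E m - indicator {..a} m * E m \<partial>Omega)"
      using that by (intro Bochner_Integration.integral_cong) (auto simp: indicator_def)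
    also have "\<dots> = 0"
      using integrable_indicator_vimage_mult[OF E id, of "{..b}"] integrable_indicator_vimage_mult[OF E id, of "{..a}"]
      by (simp add: Iic)
    finally show ?thesis .
  qed
  from integral_indicator_vimage_eq_0_if_Ioc[OF E id this]
  have "AE m in Omega. E m = 0"
    by (intro density_unique_real[OF E, of "\<lambda>_. 0", simplified])
      (auto simp: set_lebesgue_integral_def sets_restrict_space_iff mult.commute)
  then show ?thesis by eventually_elim (auto simp: E_def indicator_def)
qed

lemma cond_exp_factor_at_flat_value:
  fixes W :: "real \<Rightarrow> real"
  assumes W_int: "integrable Omega W" and g: "is_cond_exp_factor Omega X W g"
    and c: "c \<in> flat_values X"
  shows "g c = (LINT m:level_set X c|lborel. W m) / measure lborel (level_set X c)"
proof -
  let ?L = "level_set X c"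
  have "g c * measure lborel ?L = (\<integral>m. g c * indicator ?L m \<partial>Omega)"
    using sets_lborel_level_set[of c] level_set_subset[of X c]
    by (simp add: measure_Omega Int_absorb2)
  also have "\<dots> = (\<integral>m. indicator {c} (X m) * g (X m) \<partial>Omega)"
    by (intro Bochner_Integration.integral_cong) (auto simp: level_set_def indicator_def space_restrict_space)
  also have "\<dots> = (\<integral>m. indicator {c} (X m) * W m \<partial>Omega)"
    using g by (simp add: is_cond_exp_factor_def)
  also have "\<dots> = (LINT m:?L|lborel. W m)"
    by (rule integral_Omega_indicator_level_set)
  finally have "g c * measure lborel ?L = (LINT m:?L|lborel. W m)" .
  then show ?thesis
    using c by (auto simp: flat_values_def eq_divide_eq)
qed

lemma proj_HX_eq_cond_exp_factor:
  fixes W :: "real \<Rightarrow> real"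
  assumes W_meas: "W \<in> borel_measurable lborel" and W_int: "integrable Omega W"
    and g: "is_cond_exp_factor Omega X W g"
  shows "AE m in Omega. proj_HX X W m = g (X m)"
proof -
  note X = borel_measurable_Omega_mono
  have g_int: "integrable Omega (\<lambda>m. g (X m))" using g by (simp add: is_cond_exp_factor_def)
  have "AE m in Omega. X m \<notin> flat_values X \<longrightarrow> g (X m) - W m = 0"
  proof (rule AE_zero_off_flat_values)
    show "integrable Omega (\<lambda>m. g (X m) - W m)" using g_int W_int by simp
    fix B :: "real set" assume B: "B \<in> sets borel"
    show "(\<integral>m. indicator B (X m) * (g (X m) - W m) \<partial>Omega) = 0"
      using g B integrable_indicator_vimage_mult[OF g_int X B] integrable_indicator_vimage_mult[OF W_int X B]
      by (simp add: is_cond_exp_factor_def right_diff_distrib)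
  qed
  then have off_flat: "AE m in Omega. X m \<notin> flat_values X \<longrightarrow> proj_HX X W m = g (X m)"
    by eventually_elim (auto simp: proj_HX_def dest: flat_value_if_OmegaX)
  have "AE m in lborel. \<forall>c \<in> flat_values X. m \<in> level_set X c \<longrightarrow> proj_HX X W m = g c"
    using proj_HX_on_flat_level[OF W_meas] cond_exp_factor_at_flat_value[OF W_int g]
    by (subst AE_ball_countable[OF countable_flat_values]) auto
  then have "AE m in lborel. m \<in> {0<..<1} \<longrightarrow> X m \<in> flat_values X \<longrightarrow> proj_HX X W m = g (X m)"
    by eventually_elim (auto simp: level_set_def)
  then have on_flat: "AE m in Omega. X m \<in> flat_values X \<longrightarrow> proj_HX X W m = g (X m)"
    by (subst AE_restrict_space_iff) simp_all
  from off_flat on_flat show ?thesis by eventually_elim auto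
qed

end

context
  fixes X W Wp :: "real \<Rightarrow> real"
  assumes X_mono: "mono_on {0<..<1} X"
    and W_meas[measurable]: "W \<in> borel_measurable lborel"
    and W_int: "integrable Omega W"
    and Wp_prim: "\<forall>m \<in> {0..1}. Wp m = Wp 0 + (LINT t : {0..m} | lborel. W t)"
begin

lemma primitive_gen_inv_diff:
  assumes "a \<le> b"
  shows "Wp (gen_inv X b) - Wp (gen_inv X a) = (\<integral>m. indicator {a<..b} (X m) * W m \<partial>Omega)"
proof -
  note integrable = integrable_indicator_vimage_mult[OF W_int borel_measurable_Omega_mono[OF X_mono]]
  have "(\<integral>m. indicator {a<..b} (X m) * W m \<partial>Omega)
      = (\<integral>m. indicator {..b} (X m) * W m - indicator {..a} (X m) * W m \<partial>Omega)"
    using assms by (intro Bochner_Integration.integral_cong) (auto simp: indicator_def)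
  also have "\<dots> = (\<integral>m. indicator {..b} (X m) * W m \<partial>Omega) - (\<integral>m. indicator {..a} (X m) * W m \<partial>Omega)"
    using integrable[of "{..b}"] integrable[of "{..a}"] by simp
  finally show ?thesis
    using primitive_gen_inv[OF X_mono W_meas Wp_prim] by simp
qed

lemma is_LS_RN_deriv_iff_is_cond_exp_factor:
  "is_LS_RN_deriv (\<lambda>x. Wp (gen_inv X x)) (gen_inv X) g \<longleftrightarrow> is_cond_exp_factor Omega X W g"
proof (cases "g \<in> borel_measurable borel")
  case True
  note X = borel_measurable_Omega_mono[OF X_mono]
  have integrable: "integrable (interval_measure (gen_inv X)) g \<longleftrightarrow> integrable Omega (\<lambda>m. g (X m))"
    unfolding interval_measure_gen_inv[OF X_mono] using X True by (rule integrable_distr_eq)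
  have integral: "(LINT x:{a<..b}|interval_measure (gen_inv X). g x) = (\<integral>m. indicator {a<..b} (X m) * g (X m) \<partial>Omega)"
    for a b
    unfolding interval_measure_gen_inv[OF X_mono] set_lebesgue_integral_def
    using X True by (simp add: integral_distr)
  show ?thesis
  proof (cases "integrable Omega (\<lambda>m. g (X m))")
    case True
    with is_cond_exp_factor_iff_Ioc[OF W_int X \<open>g \<in> borel_measurable borel\<close>] show ?thesis
      unfolding is_LS_RN_deriv_def by (simp add: integrable integral primitive_gen_inv_diff \<open>g \<in> borel_measurable borel\<close>)
  qed (simp_all add: integrable is_LS_RN_deriv_def is_cond_exp_factor_def)
qed (simp add: is_LS_RN_deriv_def is_cond_exp_factor_def)

end

theorem lemma5p1:
  fixes X W Wp :: "real \<Rightarrow> real"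
  assumes X_mono: "mono_on {0<..<1} X"
    and X_rcont: "\<forall>m \<in> {0<..<1}. continuous (at_right m) X"
    and X_L2: "set_integrable lborel {0<..<1} (\<lambda>m. (X m)\<^sup>2)"
    and W_meas: "W \<in> borel_measurable lborel"
    and W_L2: "set_integrable lborel {0<..<1} (\<lambda>m. (W m)\<^sup>2)"
    and Wp_prim: "\<forall>m \<in> {0..1}. Wp m = Wp 0 + (LINT t : {0..m} | lborel. W t)"
  shows "(\<exists>g. is_LS_RN_deriv (\<lambda>x. Wp (gen_inv X x)) (gen_inv X) g)
    \<and> (\<forall>g. is_LS_RN_deriv (\<lambda>x. Wp (gen_inv X x)) (gen_inv X) g \<longrightarrow>
          (AE m in lborel. m \<in> {0<..<1} \<longrightarrow> proj_HX X W m = g (X m)))"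
proof -
  have W_int: "integrable Omega W"
  proof (rule Omega.square_integrable_imp_integrable)
    show "W \<in> borel_measurable Omega" using W_meas by (simp add: measurable_restrict_space1)
    show "integrable Omega (\<lambda>m. (W m)\<^sup>2)"
      using W_L2 by (simp add: set_integrable_def integrable_restrict_space)
  qed
  note RN_iff = is_LS_RN_deriv_iff_is_cond_exp_factor[OF X_mono W_meas W_int Wp_prim]
  show ?thesis
  proof (intro conjI allI impI)
    show "\<exists>g. is_LS_RN_deriv (\<lambda>x. Wp (gen_inv X x)) (gen_inv X) g"
      unfolding RN_iff
      using cond_exp_factor_exists[OF Omega.finite_measure_axioms W_int borel_measurable_Omega_mono[OF X_mono]] .
    fix g assume "is_LS_RN_deriv (\<lambda>x. Wp (gen_inv X x)) (gen_inv X) g"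
    then have "AE m in Omega. proj_HX X W m = g (X m)"
      unfolding RN_iff by (rule proj_HX_eq_cond_exp_factor[OF X_mono W_meas W_int])
    then show "AE m in lborel. m \<in> {0<..<1} \<longrightarrow> proj_HX X W m = g (X m)"
      by (subst (asm) AE_restrict_space_iff) simp_all
  qed
qed

end
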